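(* Let $\Gamma$ act ergodically (and essentially freely, preserving the probability measure) on a standard Borel probability space $(X,\nu)$, and let $\pi:X\to\{0,1\}^{E}$ be a $\Gamma$-equivariant Borel map with $\nu(U^\infty)\neq0$. Then the restriction $\mathcal{R}^{\mathrm{cl}}_{|\infty}$ of the cluster equivalence relation to $U^\infty$ is ergodic (with respect to $\nu$ restricted to $U^\infty$) if and only if $(\nu,\pi)$ has indistinguishable infinite clusters.
   Context: $\Gamma$ is a finitely generated group with finite generating set $S$ (repetitions allowed). Its right Cayley graph $G=(V,E)$ has vertex set $V=\Gamma$ and edge set $E$ indexed by $S\times\Gamma$, the edge $(s,\gamma)$ going from $\gamma$ to $\gamma s$; $\Gamma$ acts on $G$ by left multiplication. Let $o$ be the identity vertex. Elements $\omega\in\{0,1\}^E$ are identified with spanning subgraphs of $G$; the connected components of $\omega$ are its clusters, and $\Gamma$ acts on $\{0,1\}^E$ by $(\gamma\omega)(e)=\omega(\gamma^{-1}e)$. $\mathcal{R}_\Gamma$ is the orbit equivalence relation of the action on $X$. The cluster equivalence subrelation $\mathcal{R}^{\mathrm{cl}}\subseteq\mathcal{R}_\Gamma$ is defined by: $x,y$ are equivalent iff there is $\gamma\in\Gamma$ with $\gamma^{-1}x=y$ and $o,\gamma o$ in the same cluster of $\pi(x)$. $U^\infty$ is the set of $x$ whose $\mathcal{R}^{\mathrm{cl}}$-class is infinite (equivalently, the cluster of $o$ in $\pi(x)$ is infinite). Let $\mathfrak{C}^{\mathrm{cl}}_\infty=\{(x,C):x\in X,\ C\subseteq V \text{ is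 the vertex set of an infinite cluster of }\pi(x)\}$, with $\Gamma$ acting diagonally $\gamma(x,C)=(\gamma x,\gamma C)$ (Borel structure on subsets of $V$ from $\{0,1\}^V$). $(\nu,\pi)$ has indistinguishable infinite clusters if for every $\Gamma$-invariant Borel $\mathcal{A}\subseteq\mathfrak{C}^{\mathrm{cl}}_\infty$, the set of $x\in X$ for which there exist both some $(x,C)\in\mathcal{A}$ and some $(x,C')\in\mathfrak{C}^{\mathrm{cl}}_\infty\setminus\mathcal{A}$ has $\nu$-measure $0$. An equivalence relation is ergodic if every invariant measurable set is null or conull. *)

theory Defs
  imports "HOL-Probability.Probability" "HOL-Algebra.Generated_Groups"
begin

text \<open>S is a finite list of group elements (repetitions allowed); edge (i, g) goes
  from g to g * S!i.\<close>

definition cayley_edges :: "('g, 'b) monoid_scheme \<Rightarrow> 'g list \<Rightarrow> (nat \<times> 'g) set" where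
  "cayley_edges G S = {(i, g). i < length S \<and> g \<in> carrier G}"

definition config_space :: "('g, 'b) monoid_scheme \<Rightarrow> 'g list \<Rightarrow> ((nat \<times> 'g) \<Rightarrow> bool) measure" where
  "config_space G S = PiM (cayley_edges G S) (\<lambda>_. count_space UNIV)"

definition config_act :: "('g, 'b) monoid_scheme \<Rightarrow> 'g list \<Rightarrow> 'g \<Rightarrow> ((nat \<times> 'g) \<Rightarrow> bool) \<Rightarrow> ((nat \<times> 'g) \<Rightarrow> bool)" where
  "config_act G S g \<omega> = restrict (\<lambda>(i, h). \<omega> (i, inv\<^bsub>G\<^esub> g \<otimes>\<^bsub>G\<^esub> h)) (cayley_edges G S)"

definition open_adj :: "('g, 'b) monoid_scheme \<Rightarrow> 'g list \<Rightarrow> ((nat \<times> 'g) \<Rightarrow> bool) \<Rightarrow> 'g \<Rightarrow> 'g \<Rightarrow> bool" where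
  "open_adj G S \<omega> u v \<longleftrightarrow> u \<in> carrier G \<and> v \<in> carrier G \<and>
     (\<exists>i < length S. (\<omega> (i, u) \<and> v = u \<otimes>\<^bsub>G\<^esub> S ! i) \<or> (\<omega> (i, v) \<and> u = v \<otimes>\<^bsub>G\<^esub> S ! i))"

definition cluster :: "('g, 'b) monoid_scheme \<Rightarrow> 'g list \<Rightarrow> ((nat \<times> 'g) \<Rightarrow> bool) \<Rightarrow> 'g \<Rightarrow> 'g set" where
  "cluster G S \<omega> v = {w \<in> carrier G. (open_adj G S \<omega>)\<^sup>*\<^sup>* v w}"

definition clusters :: "('g, 'b) monoid_scheme \<Rightarrow> 'g list \<Rightarrow> ((nat \<times> 'g) \<Rightarrow> bool) \<Rightarrow> 'g set set" where
  "clusters G S \<omega> = cluster G S \<omega> ` carrier G"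

definition pmp_action :: "('g, 'b) monoid_scheme \<Rightarrow> 'x measure \<Rightarrow> ('g \<Rightarrow> 'x \<Rightarrow> 'x) \<Rightarrow> bool" where
  "pmp_action G M act \<longleftrightarrow>
     (\<forall>g\<in>carrier G. act g \<in> measurable M M \<and> distr M M (act g) = M) \<and>
     (\<forall>x\<in>space M. act \<one>\<^bsub>G\<^esub> x = x) \<and>
     (\<forall>g\<in>carrier G. \<forall>h\<in>carrier G. \<forall>x\<in>space M. act (g \<otimes>\<^bsub>G\<^esub> h) x = act g (act h x))"

definition essentially_free :: "('g, 'b) monoid_scheme \<Rightarrow> 'x measure \<Rightarrow> ('g \<Rightarrow> 'x \<Rightarrow> 'x) \<Rightarrow> bool" where
  "essentially_free G M act \<longleftrightarrow> (AE x in M. \<forall>g\<in>carrier G. act g x = x \<longrightarrow> g = \<one>\<^bsub>G\<^esub>)"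

definition ergodic_action :: "('g, 'b) monoid_scheme \<Rightarrow> 'x measure \<Rightarrow> ('g \<Rightarrow> 'x \<Rightarrow> 'x) \<Rightarrow> bool" where
  "ergodic_action G M act \<longleftrightarrow>
     (\<forall>A\<in>sets M. (\<forall>g\<in>carrier G. act g -` A \<inter> space M = A) \<longrightarrow>
        emeasure M A = 0 \<or> emeasure M (space M - A) = 0)"

definition equivariant_map :: "('g, 'b) monoid_scheme \<Rightarrow> 'g list \<Rightarrow> 'x measure \<Rightarrow> ('g \<Rightarrow> 'x \<Rightarrow> 'x)
    \<Rightarrow> ('x \<Rightarrow> (nat \<times> 'g) \<Rightarrow> bool) \<Rightarrow> bool" where
  "equivariant_map G S M act \<pi> \<longleftrightarrow> \<pi> \<in> measurable M (config_space G S) \<and>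
     (\<forall>g\<in>carrier G. \<forall>x\<in>space M. \<pi> (act g x) = config_act G S g (\<pi> x))"

definition U_inf :: "('g, 'b) monoid_scheme \<Rightarrow> 'g list \<Rightarrow> 'x measure \<Rightarrow> ('x \<Rightarrow> (nat \<times> 'g) \<Rightarrow> bool) \<Rightarrow> 'x set" where
  "U_inf G S M \<pi> = {x \<in> space M. infinite (cluster G S (\<pi> x) \<one>\<^bsub>G\<^esub>)}"

definition cluster_rel :: "('g, 'b) monoid_scheme \<Rightarrow> 'g list \<Rightarrow> 'x measure \<Rightarrow> ('g \<Rightarrow> 'x \<Rightarrow> 'x)
    \<Rightarrow> ('x \<Rightarrow> (nat \<times> 'g) \<Rightarrow> bool) \<Rightarrow> ('x \<times> 'x) set" where
  "cluster_rel G S M act \<pi> = {(x, y). x \<in> space M \<and>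
     (\<exists>g\<in>carrier G. act (inv\<^bsub>G\<^esub> g) x = y \<and> g \<in> cluster G S (\<pi> x) \<one>\<^bsub>G\<^esub>)}"

definition cluster_rel_ergodic_inf :: "('g, 'b) monoid_scheme \<Rightarrow> 'g list \<Rightarrow> 'x measure \<Rightarrow> ('g \<Rightarrow> 'x \<Rightarrow> 'x)
    \<Rightarrow> ('x \<Rightarrow> (nat \<times> 'g) \<Rightarrow> bool) \<Rightarrow> bool" where
  "cluster_rel_ergodic_inf G S M act \<pi> \<longleftrightarrow>
     (\<forall>A\<in>sets M. A \<subseteq> U_inf G S M \<pi> \<longrightarrow>
        (\<forall>x y. x \<in> A \<longrightarrow> y \<in> U_inf G S M \<pi> \<longrightarrow> (x, y) \<in> cluster_rel G S M act \<pi> \<longrightarrow> y \<in> A) \<longrightarrow>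
        emeasure M A = 0 \<or> emeasure M (U_inf G S M \<pi> - A) = 0)"

definition C_inf :: "('g, 'b) monoid_scheme \<Rightarrow> 'g list \<Rightarrow> 'x measure \<Rightarrow> ('x \<Rightarrow> (nat \<times> 'g) \<Rightarrow> bool) \<Rightarrow> ('x \<times> 'g set) set" where
  "C_inf G S M \<pi> = {(x, C). x \<in> space M \<and> C \<in> clusters G S (\<pi> x) \<and> infinite C}"

text \<open>Subsets of V are identified with elements of {0,1}^V (indicator functions).\<close>
definition encode_pair :: "('g, 'b) monoid_scheme \<Rightarrow> ('x \<times> 'g set) \<Rightarrow> ('x \<times> ('g \<Rightarrow> bool))" where
  "encode_pair G p = (fst p, restrict (\<lambda>v. v \<in> snd p) (carrier G))"

definition borel_in_C_inf :: "('g, 'b) monoid_scheme \<Rightarrow> 'g list \<Rightarrow> 'x measure \<Rightarrow> ('x \<Rightarrow> (nat \<times> 'g) \<Rightarrow> bool)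
    \<Rightarrow> ('x \<times> 'g set) set \<Rightarrow> bool" where
  "borel_in_C_inf G S M \<pi> A \<longleftrightarrow> A \<subseteq> C_inf G S M \<pi> \<and>
     (\<exists>B \<in> sets (M \<Otimes>\<^sub>M PiM (carrier G) (\<lambda>_. count_space UNIV)).
        encode_pair G ` A = B \<inter> encode_pair G ` C_inf G S M \<pi>)"

definition indistinguishable_inf_clusters :: "('g, 'b) monoid_scheme \<Rightarrow> 'g list \<Rightarrow> 'x measure \<Rightarrow> ('g \<Rightarrow> 'x \<Rightarrow> 'x)
    \<Rightarrow> ('x \<Rightarrow> (nat \<times> 'g) \<Rightarrow> bool) \<Rightarrow> bool" where
  "indistinguishable_inf_clusters G S M act \<pi> \<longleftrightarrow>
     (\<forall>A. borel_in_C_inf G S M \<pi> A \<longrightarrow>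
        (\<forall>g\<in>carrier G. \<forall>x C. (x, C) \<in> A \<longrightarrow> (act g x, (\<lambda>v. g \<otimes>\<^bsub>G\<^esub> v) ` C) \<in> A) \<longrightarrow>
        (\<exists>N\<in>null_sets M. {x. (\<exists>C. (x, C) \<in> A) \<and> (\<exists>C'. (x, C') \<in> C_inf G S M \<pi> - A)} \<subseteq> N))"

end

theory Submission
  imports Defs
begin

(* Write reroot x g = g^-1 x for the point x seen from the vertex g.  The cluster relation relates
   x exactly to its rerootings at vertices of the root cluster, and by equivariance the root
   cluster of reroot x g is the translate g^-1 C of the cluster C of g.  So an infinite cluster
   (x, C) corresponds, for each g in C, to a rerooted point of U_inf, and a translation-invariant
   family A of infinite clusters corresponds to the cluster-invariant set
   R = {x in U_inf. the root cluster of x lies in A}.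
   (=>) R or U_inf - R is null; points carrying clusters both in and outside A lie in the
        saturations of R and of U_inf - R under the countable group, hence in a null set.
   (<=) For cluster-invariant B, the clusters whose rerootings meet B form an invariant Borel
        family; ergodicity of the action makes the saturation of B null or conull, and
        indistinguishability shows that U_inf - B is null inside the saturation. *)

section \<open>Finitely generated groups are countable\<close>

primrec gen_level :: "('g, 'b) monoid_scheme \<Rightarrow> 'g set \<Rightarrow> nat \<Rightarrow> 'g set" where
  "gen_level G H 0 = insert \<one>\<^bsub>G\<^esub> (H \<union> m_inv G ` H)"
| "gen_level G H (Suc n) =
     gen_level G H n \<union> (\<lambda>(a, b). a \<otimes>\<^bsub>G\<^esub> b) ` (gen_level G H n \<times> gen_level G H n)"

lemma gen_level_mono: "m \<le> n \<Longrightarrow> gen_level G H m \<subseteq> gen_level G H n"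
  by (induction n) (auto simp: le_Suc_eq)

lemma countable_gen_level: "countable H \<Longrightarrow> countable (gen_level G H n)"
  by (induction n) auto

lemma generate_subset_gen_levels: "generate G H \<subseteq> (\<Union>n. gen_level G H n)"
proof
  fix x assume "x \<in> generate G H"
  then show "x \<in> (\<Union>n. gen_level G H n)"
  proof (induction rule: generate.induct)
    case (eng h1 h2)
    then obtain m n where "h1 \<in> gen_level G H m" "h2 \<in> gen_level G H n" by blast
    then have "h1 \<in> gen_level G H (max m n)" "h2 \<in> gen_level G H (max m n)"
      using gen_level_mono[of m "max m n" G H] gen_level_mono[of n "max m n" G H] by auto
    then have "h1 \<otimes>\<^bsub>G\<^esub> h2 \<in> gen_level G H (Suc (max m n))" by force
    then show ?case by blast
  qed (auto intro: exI[of _ 0])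
qed

lemma countable_generate: "countable H \<Longrightarrow> countable (generate G H)"
  by (rule countable_subset[OF generate_subset_gen_levels])
    (intro countable_UN countable_gen_level, auto)

lemma open_adj_carrier: "open_adj G S \<omega> u v \<Longrightarrow> u \<in> carrier G \<and> v \<in> carrier G"
  by (simp add: open_adj_def)

lemma symp_open_adj: "symp (open_adj G S \<omega>)"
  by (rule sympI) (auto simp: open_adj_def)

lemma cluster_self: "u \<in> carrier G \<Longrightarrow> u \<in> cluster G S \<omega> u"
  by (simp add: cluster_def)

lemma cluster_subset_carrier: "cluster G S \<omega> u \<subseteq> carrier G"
  by (auto simp: cluster_def)

lemma cluster_eq:
  assumes "v \<in> cluster G S \<omega> u"
  shows "cluster G S \<omega> v = cluster G S \<omega> u"
proof -
  have uv: "(open_adj G S \<omega>)\<^sup>*\<^sup>* u v" using assms by (simp add: cluster_def)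
  then have vu: "(open_adj G S \<omega>)\<^sup>*\<^sup>* v u" by (rule sympD[OF symp_rtranclp[OF symp_open_adj]])
  show ?thesis unfolding cluster_def using rtranclp_trans[OF uv] rtranclp_trans[OF vu] by blast
qed

definition is_translate ::
    "('g, 'b) monoid_scheme \<Rightarrow> 'g list \<Rightarrow> 'g \<Rightarrow> ((nat \<times> 'g) \<Rightarrow> bool) \<Rightarrow> ((nat \<times> 'g) \<Rightarrow> bool) \<Rightarrow> bool"
  where "is_translate G S g \<omega> \<omega>' \<longleftrightarrow>
    (\<forall>i < length S. \<forall>h \<in> carrier G. \<omega>' (i, g \<otimes>\<^bsub>G\<^esub> h) = \<omega> (i, h))"

context group
begin

lemma translate_translate_inv:
  "g \<in> carrier G \<Longrightarrow> C \<subseteq> carrier G \<Longrightarrow> (\<lambda>v. g \<otimes> v) ` (\<lambda>v. inv g \<otimes> v) ` C = C"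
  by (force simp: image_image m_assoc[symmetric] intro: image_cong)

lemma infinite_translate:
  "g \<in> carrier G \<Longrightarrow> C \<subseteq> carrier G \<Longrightarrow> infinite ((\<lambda>v. g \<otimes> v) ` C) \<longleftrightarrow> infinite C"
  using finite_imageD[OF _ inj_on_subset] inj_on_cmult[of g] by blast

lemma config_act_is_translate: "g \<in> carrier G \<Longrightarrow> is_translate G S g \<omega> (config_act G S g \<omega>)"
  by (simp add: is_translate_def config_act_def cayley_edges_def m_assoc[symmetric])

lemma is_translate_inv:
  assumes "g \<in> carrier G" "is_translate G S g \<omega> \<omega>'"
  shows "is_translate G S (inv g) \<omega>' \<omega>"
  unfolding is_translate_def
proof (intro allI impI ballI)
  fix i h assume "i < length S" "h \<in> carrier G"
  then have "\<omega>' (i, g \<otimes> (inv g \<otimes> h)) = \<omega> (i, inv g \<otimes> h)"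
    using assms unfolding is_translate_def by simp
  then show "\<omega> (i, inv g \<otimes> h) = \<omega>' (i, h)"
    using \<open>h \<in> carrier G\<close> assms(1) by (simp add: m_assoc[symmetric])
qed

lemma is_translate_adj:
  assumes "set S \<subseteq> carrier G" "g \<in> carrier G" "is_translate G S g \<omega> \<omega>'" "open_adj G S \<omega> u v"
  shows "open_adj G S \<omega>' (g \<otimes> u) (g \<otimes> v)"
proof -
  from assms(4) obtain i where uv: "u \<in> carrier G" "v \<in> carrier G" and i: "i < length S"
    "(\<omega> (i, u) \<and> v = u \<otimes> S ! i) \<or> (\<omega> (i, v) \<and> u = v \<otimes> S ! i)"
    unfolding open_adj_def by blast
  have "S ! i \<in> carrier G" using i(1) assms(1) nth_mem by blast
  then show ?thesis
    using i uv assms(2,3) unfolding open_adj_def is_translate_def by (auto simp: m_assoc)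
qed

lemma is_translate_rtranclp:
  assumes "set S \<subseteq> carrier G" "g \<in> carrier G" "is_translate G S g \<omega> \<omega>'"
    and "(open_adj G S \<omega>)\<^sup>*\<^sup>* u v"
  shows "(open_adj G S \<omega>')\<^sup>*\<^sup>* (g \<otimes> u) (g \<otimes> v)"
  using assms(4)
  by (induction rule: rtranclp_induct) (auto dest: is_translate_adj[OF assms(1-3)])

lemma is_translate_cluster_subset:
  assumes "set S \<subseteq> carrier G" "g \<in> carrier G" "is_translate G S g \<omega> \<omega>'" "u \<in> carrier G"
  shows "(\<lambda>v. g \<otimes> v) ` cluster G S \<omega> u \<subseteq> cluster G S \<omega>' (g \<otimes> u)"
  using is_translate_rtranclp[OF assms(1-3)] assms(2) by (auto simp: cluster_def)

lemma is_translate_cluster: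
  assumes S: "set S \<subseteq> carrier G" and g: "g \<in> carrier G"
    and tr: "is_translate G S g \<omega> \<omega>'" and u: "u \<in> carrier G"
  shows "cluster G S \<omega>' (g \<otimes> u) = (\<lambda>v. g \<otimes> v) ` cluster G S \<omega> u"
proof
  have "(\<lambda>v. inv g \<otimes> v) ` cluster G S \<omega>' (g \<otimes> u) \<subseteq> cluster G S \<omega> (inv g \<otimes> (g \<otimes> u))"
    using is_translate_cluster_subset[OF S _ is_translate_inv[OF g tr]] g u by simp
  also have "inv g \<otimes> (g \<otimes> u) = u" using g u by (simp add: m_assoc[symmetric])
  finally have "(\<lambda>v. g \<otimes> v) ` (\<lambda>v. inv g \<otimes> v) ` cluster G S \<omega>' (g \<otimes> u)
      \<subseteq> (\<lambda>v. g \<otimes> v) ` cluster G S \<omega> u" by (rule image_mono)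
  then show "cluster G S \<omega>' (g \<otimes> u) \<subseteq> (\<lambda>v. g \<otimes> v) ` cluster G S \<omega> u"
    using translate_translate_inv[OF g cluster_subset_carrier] by simp
qed (rule is_translate_cluster_subset[OF S g tr u])

end

lemma C_inf_memD: "(x, C) \<in> C_inf G S M \<pi> \<Longrightarrow> x \<in> space M \<and> C \<subseteq> carrier G \<and> infinite C"
  by (auto simp: C_inf_def clusters_def cluster_def)

text \<open>A family of infinite clusters is Borel iff membership is decided by a measurable set of
  encodings; this uses that the encoding is injective on sets of vertices.\<close>
lemma borel_in_C_inf_iff:
  "borel_in_C_inf G S M \<pi> A \<longleftrightarrow> A \<subseteq> C_inf G S M \<pi> \<and>
     (\<exists>B \<in> sets (M \<Otimes>\<^sub>M PiM (carrier G) (\<lambda>_. count_space UNIV)).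
        \<forall>p \<in> C_inf G S M \<pi>. p \<in> A \<longleftrightarrow> encode_pair G p \<in> B)"
proof -
  have inj: "inj_on (encode_pair G) (C_inf G S M \<pi>)"
  proof (rule inj_onI, clarify)
    fix x C y D assume "(x, C) \<in> C_inf G S M \<pi>" "(y, D) \<in> C_inf G S M \<pi>"
      and enc: "encode_pair G (x, C) = encode_pair G (y, D)"
    then have "C \<subseteq> carrier G" "D \<subseteq> carrier G" by (auto dest: C_inf_memD)
    moreover have "v \<in> C \<longleftrightarrow> v \<in> D" if "v \<in> carrier G" for v
      using fun_cong[OF arg_cong[OF enc, of snd], of v] that by (simp add: encode_pair_def)
    ultimately show "x = y \<and> C = D" using enc by (auto simp: encode_pair_def)
  qed
  have "encode_pair G ` A = B \<inter> encode_pair G ` C_inf G S M \<pi> \<longleftrightarrow>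
      (\<forall>p \<in> C_inf G S M \<pi>. p \<in> A \<longleftrightarrow> encode_pair G p \<in> B)"
    if A: "A \<subseteq> C_inf G S M \<pi>" for B
  proof
    assume eq: "encode_pair G ` A = B \<inter> encode_pair G ` C_inf G S M \<pi>"
    show "\<forall>p \<in> C_inf G S M \<pi>. p \<in> A \<longleftrightarrow> encode_pair G p \<in> B"
    proof
      fix p assume p: "p \<in> C_inf G S M \<pi>"
      then have "p \<in> A \<longleftrightarrow> encode_pair G p \<in> encode_pair G ` A"
        using inj_on_image_mem_iff[OF inj p A] by simp
      then show "p \<in> A \<longleftrightarrow> encode_pair G p \<in> B" using eq p by blast
    qed
  next
    assume "\<forall>p \<in> C_inf G S M \<pi>. p \<in> A \<longleftrightarrow> encode_pair G p \<in> B"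
    then show "encode_pair G ` A = B \<inter> encode_pair G ` C_inf G S M \<pi>" using A by auto
  qed
  then show ?thesis unfolding borel_in_C_inf_def by (cases "A \<subseteq> C_inf G S M \<pi>") simp_all
qed

lemma pred_const: "Measurable.pred M (\<lambda>x. P)"
  by (rule measurable_const) simp

text \<open>A subset of \<open>C\<close> is finite iff it lies in some finite subset of \<open>C\<close>; for countable \<open>C\<close>
  this expresses finiteness as a countable Boolean combination of membership events.\<close>
lemma finite_iff_bounded:
  assumes "X \<subseteq> C"
  shows "finite X \<longleftrightarrow> (\<exists>F \<in> {F. finite F \<and> F \<subseteq> C}. \<forall>v \<in> C. v \<in> X \<longrightarrow> v \<in> F)"
proof
  assume "finite X"
  then show "\<exists>F \<in> {F. finite F \<and> F \<subseteq> C}. \<forall>v \<in> C. v \<in> X \<longrightarrow> v \<in> F" using assms by blast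
next
  assume "\<exists>F \<in> {F. finite F \<and> F \<subseteq> C}. \<forall>v \<in> C. v \<in> X \<longrightarrow> v \<in> F"
  then obtain F where F: "finite F" "\<forall>v \<in> C. v \<in> X \<longrightarrow> v \<in> F" by blast
  then have "X \<subseteq> F" using assms by blast
  then show "finite X" using F(1) by (rule finite_subset)
qed

locale cluster_setting =
  fixes G (structure) and S :: "'g list" and M :: "'x measure" and act :: "'g \<Rightarrow> 'x \<Rightarrow> 'x"
    and \<pi> :: "'x \<Rightarrow> (nat \<times> 'g) \<Rightarrow> bool"
  assumes is_group: "group G" and S_carrier: "set S \<subseteq> carrier G"
    and S_generates: "generate G (set S) = carrier G"
    and pmp: "pmp_action G M act" and equivariant: "equivariant_map G S M act \<pi>"
begin

interpretation group G by (rule is_group)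

text \<open>Countability makes saturations and cluster events countable unions of measurable sets.\<close>
lemma countable_carrier: "countable (carrier G)"
  using countable_generate[of "set S" G] countable_finite[of "set S"] S_generates by simp

lemma act_measurable: "g \<in> carrier G \<Longrightarrow> act g \<in> measurable M M"
  using pmp by (simp add: pmp_action_def)

lemma act_one: "x \<in> space M \<Longrightarrow> act \<one> x = x"
  using pmp by (simp add: pmp_action_def)

lemma act_mult:
  "g \<in> carrier G \<Longrightarrow> h \<in> carrier G \<Longrightarrow> x \<in> space M \<Longrightarrow> act (g \<otimes> h) x = act g (act h x)"
  using pmp unfolding pmp_action_def by blast

lemma act_space: "g \<in> carrier G \<Longrightarrow> x \<in> space M \<Longrightarrow> act g x \<in> space M"
  by (rule measurable_space[OF act_measurable])

lemma act_vimage_null: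
  "E \<in> null_sets M \<Longrightarrow> g \<in> carrier G \<Longrightarrow> act g -` E \<inter> space M \<in> null_sets M"
  using null_sets_distr_iff[OF act_measurable, of g E] pmp by (simp add: pmp_action_def)

lemma \<pi>_measurable: "\<pi> \<in> measurable M (config_space G S)"
  using equivariant by (simp add: equivariant_map_def)

lemma cluster_act:
  assumes "g \<in> carrier G" "x \<in> space M" "u \<in> carrier G"
  shows "cluster G S (\<pi> (act g x)) (g \<otimes> u) = (\<lambda>v. g \<otimes> v) ` cluster G S (\<pi> x) u"
  using is_translate_cluster[OF S_carrier assms(1) config_act_is_translate[OF assms(1)] assms(3)]
    equivariant assms(1,2) by (simp add: equivariant_map_def)

section \<open>Rerooting\<close>

text \<open>The point \<open>x\<close> seen from the vertex \<open>g\<close>: the vertex \<open>g\<close> is moved to the root.\<close>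
definition reroot :: "'x \<Rightarrow> 'g \<Rightarrow> 'x" where
  "reroot x g = act (inv g) x"

lemma reroot_space: "x \<in> space M \<Longrightarrow> g \<in> carrier G \<Longrightarrow> reroot x g \<in> space M"
  by (simp add: reroot_def act_space)

lemma reroot_one: "x \<in> space M \<Longrightarrow> reroot x \<one> = x"
  by (simp add: reroot_def act_one)

lemma reroot_reroot:
  assumes "x \<in> space M" "g \<in> carrier G" "h \<in> carrier G"
  shows "reroot (reroot x g) h = reroot x (g \<otimes> h)"
proof -
  have "reroot (reroot x g) h = act (inv h \<otimes> inv g) x"
    using act_mult[of "inv h" "inv g" x] assms by (simp add: reroot_def)
  also have "inv h \<otimes> inv g = inv (g \<otimes> h)" using assms by (simp add: inv_mult_group)
  finally show ?thesis by (simp add: reroot_def)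
qed

lemma act_reroot: "x \<in> space M \<Longrightarrow> g \<in> carrier G \<Longrightarrow> act g (reroot x g) = x"
  using act_mult[of g "inv g" x] by (simp add: reroot_def act_one)

lemma reroot_act:
  assumes "x \<in> space M" "g \<in> carrier G" "h \<in> carrier G"
  shows "reroot (act h x) (h \<otimes> g) = reroot x g"
proof -
  have "act h x = reroot x (inv h)" using assms(3) by (simp add: reroot_def)
  then have "reroot (act h x) (h \<otimes> g) = reroot x (inv h \<otimes> (h \<otimes> g))"
    using reroot_reroot assms by simp
  also have "inv h \<otimes> (h \<otimes> g) = g" using assms(2,3) by (simp add: m_assoc[symmetric])
  finally show ?thesis .
qed

lemma reroot_cluster:
  assumes "x \<in> space M" "g \<in> carrier G"
  shows "cluster G S (\<pi> (reroot x g)) \<one> = (\<lambda>v. inv g \<otimes> v) ` cluster G S (\<pi> x) g"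
  using cluster_act[of "inv g" x g] assms by (simp add: reroot_def)

lemma reroot_in_U_inf:
  assumes "x \<in> space M" "g \<in> carrier G"
  shows "reroot x g \<in> U_inf G S M \<pi> \<longleftrightarrow> infinite (cluster G S (\<pi> x) g)"
proof -
  have "reroot x g \<in> U_inf G S M \<pi> \<longleftrightarrow> infinite ((\<lambda>v. inv g \<otimes> v) ` cluster G S (\<pi> x) g)"
    using reroot_space[OF assms] reroot_cluster[OF assms] by (simp add: U_inf_def)
  also have "\<dots> \<longleftrightarrow> infinite (cluster G S (\<pi> x) g)"
    using assms(2) by (intro infinite_translate cluster_subset_carrier) simp
  finally show ?thesis .
qed

lemma cluster_rel_iff:
  "(x, y) \<in> cluster_rel G S M act \<pi> \<longleftrightarrow>
     x \<in> space M \<and> (\<exists>g \<in> cluster G S (\<pi> x) \<one>. y = reroot x g)"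
  by (auto simp: cluster_rel_def reroot_def cluster_def)

lemma cluster_rel_reroot_back:
  assumes x: "x \<in> space M" and g: "g \<in> cluster G S (\<pi> x) \<one>"
  shows "(reroot x g, x) \<in> cluster_rel G S M act \<pi>"
proof -
  have gc: "g \<in> carrier G" using g by (simp add: cluster_def)
  have "inv g \<otimes> \<one> \<in> (\<lambda>v. inv g \<otimes> v) ` cluster G S (\<pi> x) \<one>"
    using cluster_self[of \<one> G S "\<pi> x"] by blast
  also have "\<dots> = cluster G S (\<pi> (reroot x g)) \<one>"
    using reroot_cluster[OF x gc] cluster_eq[OF g] by simp
  finally have "inv g \<in> cluster G S (\<pi> (reroot x g)) \<one>" using gc by simp
  moreover have "reroot (reroot x g) (inv g) = x"
    using reroot_reroot[OF x gc, of "inv g"] gc x by (simp add: reroot_one)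
  ultimately show ?thesis
    unfolding cluster_rel_iff using reroot_space[OF x gc] by (intro conjI bexI[of _ "inv g"]) auto
qed

lemma pred_open_adj: "Measurable.pred M (\<lambda>x. open_adj G S (\<pi> x) u v)"
proof (cases "u \<in> carrier G \<and> v \<in> carrier G")
  case True
  have edge: "Measurable.pred M (\<lambda>x. \<pi> x (i, w))" if "i < length S" "w \<in> carrier G" for i w
  proof -
    have "(\<lambda>\<omega>. \<omega> (i, w)) \<in> measurable (config_space G S) (count_space UNIV)"
      unfolding config_space_def using that
      by (intro measurable_component_singleton) (simp add: cayley_edges_def)
    then show ?thesis by (rule measurable_compose[OF \<pi>_measurable])
  qed
  have adj: "open_adj G S (\<pi> x) u v \<longleftrightarrow>
      (\<exists>i \<in> {..<length S}. (\<pi> x (i, u) \<and> v = u \<otimes> S ! i) \<or> (\<pi> x (i, v) \<and> u = v \<otimes> S ! i))" for x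
    using True unfolding open_adj_def Bex_def lessThan_iff by blast
  show ?thesis unfolding adj
  proof (rule measurable_pred_countable(2))
    fix i assume "i \<in> {..<length S}"
    then show "Measurable.pred M
        (\<lambda>x. (\<pi> x (i, u) \<and> v = u \<otimes> S ! i) \<or> (\<pi> x (i, v) \<and> u = v \<otimes> S ! i))"
      using True by (intro pred_intros_logic edge pred_const) auto
  qed simp
next
  case False
  then have "open_adj G S (\<pi> x) u v \<longleftrightarrow> False" for x by (auto simp: open_adj_def)
  then show ?thesis by (simp add: pred_const)
qed

lemma pred_open_adj_pow: "Measurable.pred M (\<lambda>x. (open_adj G S (\<pi> x) ^^ n) u v)"
proof (induction n arbitrary: v)
  case 0
  show ?case by (simp add: pred_const)
next
  case (Suc n)
  have "(open_adj G S (\<pi> x) ^^ Suc n) u v \<longleftrightarrow>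
      (\<exists>w \<in> carrier G. (open_adj G S (\<pi> x) ^^ n) u w \<and> open_adj G S (\<pi> x) w v)" for x
    by (auto simp: relcompp.simps dest: open_adj_carrier)
  then show ?case
    by (simp only:) (intro measurable_pred_countable(2)[OF countable_carrier]
        pred_intros_logic(3) Suc pred_open_adj)
qed

lemma pred_in_cluster: "Measurable.pred M (\<lambda>x. v \<in> cluster G S (\<pi> x) u)"
  unfolding cluster_def mem_Collect_eq rtranclp_power
  by (intro pred_intros_conj1' pred_intros_countable(2) pred_open_adj_pow)

lemma pred_infinite_cluster: "Measurable.pred M (\<lambda>x. infinite (cluster G S (\<pi> x) u))"
proof -
  have "Measurable.pred M (\<lambda>x. \<forall>v \<in> carrier G. v \<in> cluster G S (\<pi> x) u \<longrightarrow> v \<in> F)" for F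
    by (intro measurable_pred_countable(1)[OF countable_carrier] pred_intros_logic(4)
        pred_in_cluster pred_const)
  then have "Measurable.pred M (\<lambda>x. \<exists>F \<in> {F. finite F \<and> F \<subseteq> carrier G}.
      \<forall>v \<in> carrier G. v \<in> cluster G S (\<pi> x) u \<longrightarrow> v \<in> F)"
    by (intro measurable_pred_countable(2) countable_Collect_finite_subset countable_carrier)
  then show ?thesis
    unfolding finite_iff_bounded[OF cluster_subset_carrier] by (rule pred_intros_logic(2))
qed

lemma U_inf_sets: "U_inf G S M \<pi> \<in> sets M"
  using pred_infinite_cluster[of \<one>] by (simp add: U_inf_def pred_def)

lemma root_encoding_measurable:
  "(\<lambda>x. encode_pair G (x, cluster G S (\<pi> x) \<one>))
     \<in> measurable M (M \<Otimes>\<^sub>M PiM (carrier G) (\<lambda>_. count_space UNIV))"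
  unfolding encode_pair_def fst_conv snd_conv
  by (intro measurable_Pair measurable_ident_sets[OF refl] measurable_restrict pred_in_cluster)

section \<open>Saturation under the group\<close>

definition saturation :: "'x set \<Rightarrow> 'x set" where
  "saturation E = {x \<in> space M. \<exists>g \<in> carrier G. reroot x g \<in> E}"

lemma saturation_eq_UN: "saturation E = (\<Union>g \<in> carrier G. act (inv g) -` E \<inter> space M)"
  by (auto simp: saturation_def reroot_def)

lemma saturation_sets: "E \<in> sets M \<Longrightarrow> saturation E \<in> sets M"
  unfolding saturation_eq_UN
  by (intro sets.countable_UN'[OF countable_carrier]) (auto intro!: measurable_sets[OF act_measurable])

text \<open>Since the group is countable, saturations of null sets are null.\<close>
lemma saturation_null: "E \<in> null_sets M \<Longrightarrow> saturation E \<in> null_sets M"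
  unfolding saturation_eq_UN
  by (intro null_sets_UN'[OF countable_carrier] act_vimage_null) auto

lemma subset_saturation: "E \<subseteq> space M \<Longrightarrow> E \<subseteq> saturation E"
  using reroot_one by (force simp: saturation_def)

lemma saturation_invariant:
  assumes h: "h \<in> carrier G"
  shows "act h -` saturation E \<inter> space M = saturation E"
proof (intro equalityI subsetI)
  fix x assume "x \<in> act h -` saturation E \<inter> space M"
  then obtain g where x: "x \<in> space M" and g: "g \<in> carrier G" "reroot (act h x) g \<in> E"
    by (auto simp: saturation_def)
  have "reroot (act h x) g = reroot x (inv h \<otimes> g)"
    using reroot_act[OF x _ h, of "inv h \<otimes> g"] g h by (simp add: m_assoc[symmetric])
  then show "x \<in> saturation E" using x g h by (auto simp: saturation_def)
next
  fix x assume "x \<in> saturation E"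
  then obtain g where x: "x \<in> space M" and g: "g \<in> carrier G" "reroot x g \<in> E"
    by (auto simp: saturation_def)
  then have "reroot (act h x) (h \<otimes> g) \<in> E" using reroot_act[OF x g(1) h] by simp
  then show "x \<in> act h -` saturation E \<inter> space M"
    using x g h act_space by (auto simp: saturation_def)
qed

definition translation_invariant :: "('x \<times> 'g set) set \<Rightarrow> bool" where
  "translation_invariant A \<longleftrightarrow>
     (\<forall>g \<in> carrier G. \<forall>x C. (x, C) \<in> A \<longrightarrow> (act g x, (\<lambda>v. g \<otimes> v) ` C) \<in> A)"

definition split_points :: "('x \<times> 'g set) set \<Rightarrow> 'x set" where
  "split_points A = {x. (\<exists>C. (x, C) \<in> A) \<and> (\<exists>C'. (x, C') \<in> C_inf G S M \<pi> - A)}"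

lemma root_cluster_C_inf: "x \<in> U_inf G S M \<pi> \<Longrightarrow> (x, cluster G S (\<pi> x) \<one>) \<in> C_inf G S M \<pi>"
  by (auto simp: U_inf_def C_inf_def clusters_def)

lemma C_inf_cluster_eq: "(x, C) \<in> C_inf G S M \<pi> \<Longrightarrow> g \<in> C \<Longrightarrow> C = cluster G S (\<pi> x) g"
  by (auto simp: C_inf_def clusters_def dest: cluster_eq)

lemma C_inf_reroot:
  assumes C: "(x, C) \<in> C_inf G S M \<pi>" and g: "g \<in> C"
  shows "reroot x g \<in> U_inf G S M \<pi>"
    and "cluster G S (\<pi> (reroot x g)) \<one> = (\<lambda>v. inv g \<otimes> v) ` C"
proof -
  have x: "x \<in> space M" and gc: "g \<in> carrier G" and "infinite C" using C g by (auto dest: C_inf_memD)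
  then show "reroot x g \<in> U_inf G S M \<pi>"
    using reroot_in_U_inf C_inf_cluster_eq[OF C g] by simp
  show "cluster G S (\<pi> (reroot x g)) \<one> = (\<lambda>v. inv g \<otimes> v) ` C"
    using reroot_cluster[OF x gc] C_inf_cluster_eq[OF C g] by simp
qed

lemma C_inf_act:
  assumes C: "(x, C) \<in> C_inf G S M \<pi>" and h: "h \<in> carrier G"
  shows "(act h x, (\<lambda>v. h \<otimes> v) ` C) \<in> C_inf G S M \<pi>"
proof -
  obtain g where g: "g \<in> carrier G" "C = cluster G S (\<pi> x) g" using C by (auto simp: C_inf_def clusters_def)
  have x: "x \<in> space M" and Cc: "C \<subseteq> carrier G" and "infinite C" using C by (auto dest: C_inf_memD)
  have "cluster G S (\<pi> (act h x)) (h \<otimes> g) = (\<lambda>v. h \<otimes> v) ` C"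
    using cluster_act[OF h x g(1)] g(2) by simp
  then have "(\<lambda>v. h \<otimes> v) ` C \<in> clusters G S (\<pi> (act h x))"
    unfolding clusters_def using h g(1) by (intro image_eqI[where x="h \<otimes> g"]) simp_all
  moreover have "infinite ((\<lambda>v. h \<otimes> v) ` C)"
    using infinite_translate[OF h Cc] \<open>infinite C\<close> by simp
  ultimately show ?thesis using act_space[OF h x] by (simp add: C_inf_def)
qed

lemma translation_invariant_reroot_iff:
  assumes A: "translation_invariant A" and C: "(x, C) \<in> C_inf G S M \<pi>" and g: "g \<in> C"
  shows "(x, C) \<in> A \<longleftrightarrow> (reroot x g, cluster G S (\<pi> (reroot x g)) \<one>) \<in> A"
proof -
  have x: "x \<in> space M" and Cc: "C \<subseteq> carrier G" using C by (auto dest: C_inf_memD)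
  then have gc: "g \<in> carrier G" using g by blast
  have "(x, C) \<in> A \<longleftrightarrow> (reroot x g, (\<lambda>v. inv g \<otimes> v) ` C) \<in> A"
  proof
    assume "(x, C) \<in> A"
    then show "(reroot x g, (\<lambda>v. inv g \<otimes> v) ` C) \<in> A"
      using A gc unfolding translation_invariant_def reroot_def by blast
  next
    assume "(reroot x g, (\<lambda>v. inv g \<otimes> v) ` C) \<in> A"
    then have "(act g (reroot x g), (\<lambda>v. g \<otimes> v) ` (\<lambda>v. inv g \<otimes> v) ` C) \<in> A"
      using A gc unfolding translation_invariant_def by blast
    then show "(x, C) \<in> A" using act_reroot[OF x gc] translate_translate_inv[OF gc Cc] by simp
  qed
  then show ?thesis using C_inf_reroot(2)[OF C g] by simp
qed

definition reroot_family :: "'x set \<Rightarrow> ('x \<times> 'g set) set" where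
  "reroot_family B = {(x, C) \<in> C_inf G S M \<pi>. \<exists>g \<in> C. reroot x g \<in> B}"

lemma reroot_family_invariant: "translation_invariant (reroot_family B)"
  unfolding translation_invariant_def
proof (intro ballI allI impI)
  fix h x C assume h: "h \<in> carrier G" and "(x, C) \<in> reroot_family B"
  then obtain g where C: "(x, C) \<in> C_inf G S M \<pi>" and g: "g \<in> C" "reroot x g \<in> B"
    by (auto simp: reroot_family_def)
  have "x \<in> space M" "g \<in> carrier G" using C g by (auto dest: C_inf_memD)
  then have "reroot (act h x) (h \<otimes> g) \<in> B" using reroot_act h g by simp
  then show "(act h x, (\<lambda>v. h \<otimes> v) ` C) \<in> reroot_family B"
    using C_inf_act[OF C h] g(1) by (auto simp: reroot_family_def)
qed

lemma reroot_family_borel: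
  assumes B: "B \<in> sets M"
  shows "borel_in_C_inf G S M \<pi> (reroot_family B)"
proof -
  let ?P = "M \<Otimes>\<^sub>M PiM (carrier G) (\<lambda>_. count_space (UNIV :: bool set))"
  define B' where "B' = {p \<in> space ?P. \<exists>g \<in> carrier G. snd p g \<and> reroot (fst p) g \<in> B}"
  have "Measurable.pred ?P (\<lambda>p. snd p g \<and> reroot (fst p) g \<in> B)" if g: "g \<in> carrier G" for g
  proof -
    have "Measurable.pred ?P (\<lambda>p. snd p g)"
      using g by (intro measurable_compose[OF measurable_snd measurable_component_singleton])
    moreover have "(\<lambda>p. reroot (fst p) g) \<in> measurable ?P M"
      unfolding reroot_def using g by (intro measurable_compose[OF measurable_fst act_measurable]) simp
    then have "Measurable.pred ?P (\<lambda>p. reroot (fst p) g \<in> B)" by (rule pred_sets2[OF B])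
    ultimately show ?thesis by (rule pred_intros_logic(3))
  qed
  then have "B' \<in> sets ?P"
    unfolding B'_def by (intro measurable_pred_countable(2)[OF countable_carrier, unfolded pred_def]) auto
  moreover have "p \<in> reroot_family B \<longleftrightarrow> encode_pair G p \<in> B'" if p: "p \<in> C_inf G S M \<pi>" for p
  proof -
    obtain x C where xC: "p = (x, C)" by (cases p)
    with p have "x \<in> space M" "C \<subseteq> carrier G" by (auto dest: C_inf_memD)
    then show ?thesis
      using p xC by (auto simp: reroot_family_def B'_def encode_pair_def space_pair_measure space_PiM)
  qed
  ultimately show ?thesis
    unfolding borel_in_C_inf_iff by (auto simp: reroot_family_def)
qed

definition root_set :: "('x \<times> 'g set) set \<Rightarrow> 'x set" where
  "root_set A = {x \<in> U_inf G S M \<pi>. (x, cluster G S (\<pi> x) \<one>) \<in> A}"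

lemma root_set_sets:
  assumes "borel_in_C_inf G S M \<pi> A"
  shows "root_set A \<in> sets M"
proof -
  obtain B where B: "B \<in> sets (M \<Otimes>\<^sub>M PiM (carrier G) (\<lambda>_. count_space UNIV))"
    and A_B: "\<forall>p \<in> C_inf G S M \<pi>. p \<in> A \<longleftrightarrow> encode_pair G p \<in> B"
    using assms unfolding borel_in_C_inf_iff by blast
  have "root_set A =
      U_inf G S M \<pi> \<inter> ((\<lambda>x. encode_pair G (x, cluster G S (\<pi> x) \<one>)) -` B \<inter> space M)"
    using A_B root_cluster_C_inf by (auto simp: root_set_def U_inf_def)
  then show ?thesis using U_inf_sets measurable_sets[OF root_encoding_measurable B] by simp
qed

lemma root_set_invariant:
  assumes A: "translation_invariant A"
  shows "\<forall>x y. x \<in> root_set A \<longrightarrow> y \<in> U_inf G S M \<pi> \<longrightarrow> (x, y) \<in> cluster_rel G S M act \<pi> \<longrightarrow>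
      y \<in> root_set A"
proof (intro allI impI)
  fix x y assume x: "x \<in> root_set A" and y: "y \<in> U_inf G S M \<pi>"
    and rel: "(x, y) \<in> cluster_rel G S M act \<pi>"
  obtain g where g: "g \<in> cluster G S (\<pi> x) \<one>" "y = reroot x g"
    using rel by (auto simp: cluster_rel_iff)
  have "(x, cluster G S (\<pi> x) \<one>) \<in> C_inf G S M \<pi>"
    using x by (simp add: root_set_def root_cluster_C_inf)
  then show "y \<in> root_set A"
    using x y g translation_invariant_reroot_iff[OF A _ g(1)] by (simp add: root_set_def)
qed

lemma split_points_saturation:
  assumes A: "translation_invariant A" and A_C: "A \<subseteq> C_inf G S M \<pi>"
  shows "split_points A \<subseteq> saturation (root_set A) \<inter> saturation (U_inf G S M \<pi> - root_set A)"
proof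
  fix x assume "x \<in> split_points A"
  then obtain C C' where C: "(x, C) \<in> A" and C': "(x, C') \<in> C_inf G S M \<pi>" "(x, C') \<notin> A"
    by (auto simp: split_points_def)
  then have CC: "(x, C) \<in> C_inf G S M \<pi>" using A_C by blast
  obtain g g' where "g \<in> C" "g' \<in> C'" using CC C'(1) by (fastforce dest!: C_inf_memD)
  then have "reroot x g \<in> root_set A" "reroot x g' \<in> U_inf G S M \<pi> - root_set A"
    "g \<in> carrier G" "g' \<in> carrier G"
    using C C' CC C_inf_reroot(1) translation_invariant_reroot_iff[OF A]
    by (auto simp: root_set_def dest: C_inf_memD)
  then show "x \<in> saturation (root_set A) \<inter> saturation (U_inf G S M \<pi> - root_set A)"
    using CC by (auto simp: saturation_def dest: C_inf_memD)
qed

text \<open>For a set \<open>B\<close> invariant under the cluster relation, every point of \<open>U_inf - B\<close> having a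
  rerooting in \<open>B\<close> carries both a cluster of the family of \<open>B\<close> (the cluster of that vertex)
  and an infinite cluster outside it (its root cluster).\<close>
lemma saturation_outside_split_points:
  assumes B_U: "B \<subseteq> U_inf G S M \<pi>"
    and B_invariant: "\<forall>x y. x \<in> B \<longrightarrow> y \<in> U_inf G S M \<pi> \<longrightarrow> (x, y) \<in> cluster_rel G S M act \<pi> \<longrightarrow> y \<in> B"
  shows "(U_inf G S M \<pi> - B) \<inter> saturation B \<subseteq> split_points (reroot_family B)"
proof
  fix x assume x: "x \<in> (U_inf G S M \<pi> - B) \<inter> saturation B"
  then have xs: "x \<in> space M" and xU: "x \<in> U_inf G S M \<pi>" and xB: "x \<notin> B"
    by (auto simp: saturation_def)
  obtain g where g: "g \<in> carrier G" "reroot x g \<in> B" using x by (auto simp: saturation_def)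
  have "infinite (cluster G S (\<pi> x) g)" using B_U g reroot_in_U_inf[OF xs g(1)] by blast
  then have "(x, cluster G S (\<pi> x) g) \<in> C_inf G S M \<pi>"
    using xs g(1) by (auto simp: C_inf_def clusters_def)
  then have in_family: "(x, cluster G S (\<pi> x) g) \<in> reroot_family B"
    using g cluster_self[OF g(1)] by (auto simp: reroot_family_def)
  have out_family: "(x, cluster G S (\<pi> x) \<one>) \<notin> reroot_family B"
  proof
    assume "(x, cluster G S (\<pi> x) \<one>) \<in> reroot_family B"
    then obtain g' where g': "g' \<in> cluster G S (\<pi> x) \<one>" "reroot x g' \<in> B"
      by (auto simp: reroot_family_def)
    then have "x \<in> B" using B_invariant cluster_rel_reroot_back[OF xs g'(1)] xU by blast
    with xB show False by contradiction
  qed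
  show "x \<in> split_points (reroot_family B)"
    using in_family out_family root_cluster_C_inf[OF xU] unfolding split_points_def by blast
qed

theorem ergodic_imp_indistinguishable:
  assumes erg: "cluster_rel_ergodic_inf G S M act \<pi>"
  shows "indistinguishable_inf_clusters G S M act \<pi>"
  unfolding indistinguishable_inf_clusters_def translation_invariant_def[symmetric]
    split_points_def[symmetric]
proof (intro allI impI)
  let ?U = "U_inf G S M \<pi>"
  fix A assume borel: "borel_in_C_inf G S M \<pi> A" and A: "translation_invariant A"
  let ?R = "root_set A"
  have "?R \<subseteq> ?U" by (auto simp: root_set_def)
  then have "emeasure M ?R = 0 \<or> emeasure M (?U - ?R) = 0"
    using erg root_set_sets[OF borel] root_set_invariant[OF A]
    unfolding cluster_rel_ergodic_inf_def by blast
  then have "?R \<in> null_sets M \<or> ?U - ?R \<in> null_sets M"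
    using root_set_sets[OF borel] U_inf_sets by (auto simp: null_sets_def)
  moreover have "split_points A \<subseteq> saturation ?R \<inter> saturation (?U - ?R)"
    using split_points_saturation[OF A] borel by (simp add: borel_in_C_inf_def)
  ultimately show "\<exists>N \<in> null_sets M. split_points A \<subseteq> N"
    using saturation_null by blast
qed

theorem indistinguishable_imp_ergodic:
  assumes indist: "indistinguishable_inf_clusters G S M act \<pi>"
    and erg: "ergodic_action G M act"
  shows "cluster_rel_ergodic_inf G S M act \<pi>"
  unfolding cluster_rel_ergodic_inf_def
proof (intro ballI impI)
  let ?U = "U_inf G S M \<pi>"
  fix B assume B: "B \<in> sets M" "B \<subseteq> ?U"
    and B_invariant: "\<forall>x y. x \<in> B \<longrightarrow> y \<in> ?U \<longrightarrow> (x, y) \<in> cluster_rel G S M act \<pi> \<longrightarrow> y \<in> B"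
  have "\<forall>A. borel_in_C_inf G S M \<pi> A \<longrightarrow> translation_invariant A \<longrightarrow>
      (\<exists>N \<in> null_sets M. split_points A \<subseteq> N)"
    using indist unfolding indistinguishable_inf_clusters_def translation_invariant_def[symmetric]
      split_points_def[symmetric] .
  then obtain N where N: "N \<in> null_sets M" "split_points (reroot_family B) \<subseteq> N"
    using reroot_family_borel[OF B(1)] reroot_family_invariant by blast
  have "\<forall>g \<in> carrier G. act g -` saturation B \<inter> space M = saturation B"
    using saturation_invariant by blast
  then have "emeasure M (saturation B) = 0 \<or> emeasure M (space M - saturation B) = 0"
    using erg saturation_sets[OF B(1)] unfolding ergodic_action_def by blast
  then show "emeasure M B = 0 \<or> emeasure M (?U - B) = 0"
  proof
    assume "emeasure M (saturation B) = 0"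
    moreover have "B \<subseteq> saturation B" using subset_saturation sets.sets_into_space[OF B(1)] by blast
    ultimately show ?thesis using emeasure_eq_0 saturation_sets[OF B(1)] by blast
  next
    assume "emeasure M (space M - saturation B) = 0"
    then have "space M - saturation B \<in> null_sets M"
      using saturation_sets[OF B(1)] by (auto simp: null_sets_def)
    then have "(space M - saturation B) \<union> N \<in> null_sets M" using N(1) by (rule null_sets.Un)
    moreover have "?U - B \<subseteq> (space M - saturation B) \<union> N"
      using saturation_outside_split_points[OF B(2) B_invariant] N(2) by (auto simp: U_inf_def)
    ultimately show ?thesis using emeasure_eq_0 by (auto simp: null_sets_def)
  qed
qed

end

theorem mainTheorem5:
  fixes G :: "('g, 'b) monoid_scheme" and S :: "'g list"
    and M :: "'x::polish_space measure" and act :: "'g \<Rightarrow> 'x \<Rightarrow> 'x"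
    and \<pi> :: "'x \<Rightarrow> (nat \<times> 'g) \<Rightarrow> bool"
  assumes "group G"
    and "set S \<subseteq> carrier G" and "generate G (set S) = carrier G"
    and "prob_space M" and "sets M = sets borel"
    and "pmp_action G M act" and "essentially_free G M act" and "ergodic_action G M act"
    and "equivariant_map G S M act \<pi>"
    and "emeasure M (U_inf G S M \<pi>) \<noteq> 0"
  shows "cluster_rel_ergodic_inf G S M act \<pi> \<longleftrightarrow> indistinguishable_inf_clusters G S M act \<pi>"
proof -
  interpret cluster_setting G S M act \<pi>
    using assms by (simp add: cluster_setting_def)
  show ?thesis
    using ergodic_imp_indistinguishable indistinguishable_imp_ergodic assms(8) by blast
qed

end
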